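(* Let $(\mathcal T_0,\mathfrak c)$ be a colored initial triangulation in $\mathbb R^n$, $n\ge2$, let $\mathcal T\in\mathbb B$ and $T\in\mathcal T$, and consider the call $\mathrm{Refine}(\mathcal T,T)$. (i) If $T'\in\mathbb T$ is flagged for refinement in a recursive call of this procedure, then there is a chain $T_0,\dots,T_J\in\mathbb T$, $J\in\mathbb N_0$, with $T_0=T$, $T_J=T'$ and $\mathrm{bse}(T_j)\in\mathcal E(T_{j+1})$ for all $j=0,\dots,J-1$. (ii) If $T'\in\mathbb T$ is a simplex resulting from this procedure (i.e. created by it), then there is a chain $T_0,\dots,T_J\in\mathbb T$, $J\in\mathbb N_0$, with $T_0=T$ and $\mathrm{bse}(T_j)\in\mathcal E(T_{j+1})$ for $j=0,\dots,J-1$, such that $T'$ is a child of $T_J$.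
   Context: A colored initial triangulation is a conforming triangulation $\mathcal T_0$ of a polyhedral domain in $\mathbb R^n$ (finite set of $n$-simplices with disjoint interiors, any two meeting in the empty set or a common subsimplex) with $\mathfrak c:\mathcal V(\mathcal T_0)\to\{0,\dots,n\}$ such that the vertices of each simplex have distinct colors. Each $T\in\mathcal T_0$ is tagged as $[v_n,v_0,\dots,v_{n-1}]_n$ where $\mathfrak c(v_j)=j$. Maubach's bisection of a tagged simplex $[v_0,\dots,v_n]_\gamma$: bisection edge $\mathrm{bse}=[v_0,v_\gamma]$, $v'=(v_0+v_\gamma)/2$, $\gamma'=\gamma-1$ if $\gamma\ge2$ and $n$ otherwise; children $[v_0,\dots,v_{\gamma-1},v',v_{\gamma+1},\dots,v_n]_{\gamma'}$ and $[v_1,\dots,v_\gamma,v',v_{\gamma+1},\dots,v_n]_{\gamma'}$. $\mathcal E(S)$ is the set of edges of $S$. $\mathrm{Refine}(\mathcal T,T)$: let $e=\mathrm{bse}(T)$ and $\omega(e)$ the simplices of $\mathcal T$ having $e$ as an edge; if some $T'\in\omega(e)$ has $\mathrm{bse}(T')\ne e$, then $T'$ is flagged for refinement and the procedure returns $\mathrm{Refine}(\mathrm{Refine}(\mathcal T,T'),T)$; otherwise it replaces each simplex in $\omega(e)$ by its two children. $\mathbb B$ is the set of triangulations obtained from $\mathcal T_0$ by finitely many such refinements, $\mathbb T$ the set of all simplices occurring in elements of $\mathbb B$. *)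

theory Defs
  imports "HOL-Analysis.Analysis"
begin

text \<open>A tagged simplex [v_0,...,v_n]_gamma is represented as the pair (vertex list, tag).\<close>
type_synonym 'a tsimplex = "'a list \<times> nat"

definition conforming_triang :: "(real^'n) set set \<Rightarrow> bool" where
  "conforming_triang T0 \<longleftrightarrow>
     finite T0 \<and> T0 \<noteq> {} \<and>
     (\<forall>S\<in>T0. card S = CARD('n) + 1 \<and> \<not> affine_dependent S) \<and>
     (\<forall>S\<in>T0. \<forall>S'\<in>T0. S \<noteq> S' \<longrightarrow>
        interior (convex hull S) \<inter> interior (convex hull S') = {}) \<and>
     (\<forall>S\<in>T0. \<forall>S'\<in>T0. \<exists>F. F \<subseteq> S \<and> F \<subseteq> S' \<and>
        convex hull S \<inter> convex hull S' = convex hull F) \<and>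
     (let U = (\<Union>S\<in>T0. convex hull S) in connected (interior U) \<and> closure (interior U) = U)"

definition colored_init_triang :: "(real^'n) set set \<Rightarrow> (real^'n \<Rightarrow> nat) \<Rightarrow> bool" where
  "colored_init_triang T0 c \<longleftrightarrow> conforming_triang T0 \<and>
     (\<forall>S\<in>T0. c ` S \<subseteq> {0..CARD('n)} \<and> inj_on c S)"

text \<open>Tagging of the initial simplices: [v_n, v_0, ..., v_(n-1)]_n with colour(v_j) = j.\<close>
definition init_mesh :: "(real^'n) set set \<Rightarrow> (real^'n \<Rightarrow> nat) \<Rightarrow> (real^'n) tsimplex set" where
  "init_mesh T0 c = {(vs, CARD('n)) | vs. set vs \<in> T0 \<and> length vs = CARD('n) + 1 \<and>
      c (vs ! 0) = CARD('n) \<and> (\<forall>j<CARD('n). c (vs ! Suc j) = j)}"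

definition edges :: "'a tsimplex \<Rightarrow> 'a set set" where
  "edges S = {{fst S ! i, fst S ! j} | i j. i < j \<and> j < length (fst S)}"

definition bse :: "'a tsimplex \<Rightarrow> 'a set" where
  "bse S = {fst S ! 0, fst S ! snd S}"

definition new_tag :: "'a tsimplex \<Rightarrow> nat" where
  "new_tag S = (if snd S \<ge> 2 then snd S - 1 else length (fst S) - 1)"

definition child1 :: "('a::real_vector) tsimplex \<Rightarrow> 'a tsimplex" where
  "child1 S = (let vs = fst S; g = snd S in
     (take g vs @ midpoint (vs ! 0) (vs ! g) # drop (g + 1) vs, new_tag S))"

definition child2 :: "('a::real_vector) tsimplex \<Rightarrow> 'a tsimplex" where
  "child2 S = (let vs = fst S; g = snd S in
     (take g (drop 1 vs) @ midpoint (vs ! 0) (vs ! g) # drop (g + 1) vs, new_tag S))"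

definition children :: "('a::real_vector) tsimplex \<Rightarrow> 'a tsimplex set" where
  "children S = {child1 S, child2 S}"

definition omega :: "'a tsimplex set \<Rightarrow> 'a set \<Rightarrow> 'a tsimplex set" where
  "omega Tr e = {S \<in> Tr. e \<in> edges S}"

text \<open>refine Tr T Tr': the call Refine(Tr,T) can terminate with result Tr'
  (all choices of the flagged simplex are allowed).\<close>
inductive refine :: "('a::real_vector) tsimplex set \<Rightarrow> 'a tsimplex \<Rightarrow> 'a tsimplex set \<Rightarrow> bool" where
  bisect: "(\<forall>S\<in>omega Tr (bse T). bse S = bse T) \<Longrightarrow>
     refine Tr T ((Tr - omega Tr (bse T)) \<union> (\<Union>S\<in>omega Tr (bse T). children S))"
| recur: "S \<in> omega Tr (bse T) \<Longrightarrow> bse S \<noteq> bse T \<Longrightarrow> refine Tr S Tr1 \<Longrightarrow>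
     refine Tr1 T Tr2 \<Longrightarrow> refine Tr T Tr2"

text \<open>flagged_in Tr T T': T' is flagged for refinement at some point during
  (a possibly non-terminating execution of) the call Refine(Tr,T), including nested calls.\<close>
inductive flagged_in :: "('a::real_vector) tsimplex set \<Rightarrow> 'a tsimplex \<Rightarrow> 'a tsimplex \<Rightarrow> bool" where
  here: "S \<in> omega Tr (bse T) \<Longrightarrow> bse S \<noteq> bse T \<Longrightarrow> flagged_in Tr T S"
| inner: "S \<in> omega Tr (bse T) \<Longrightarrow> bse S \<noteq> bse T \<Longrightarrow> flagged_in Tr S T' \<Longrightarrow> flagged_in Tr T T'"
| outer: "S \<in> omega Tr (bse T) \<Longrightarrow> bse S \<noteq> bse T \<Longrightarrow> refine Tr S Tr1 \<Longrightarrow>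
     flagged_in Tr1 T T' \<Longrightarrow> flagged_in Tr T T'"

text \<open>created_in Tr T T': T' is created by a bisection step during the call Refine(Tr,T).\<close>
inductive created_in :: "('a::real_vector) tsimplex set \<Rightarrow> 'a tsimplex \<Rightarrow> 'a tsimplex \<Rightarrow> bool" where
  here: "(\<forall>S\<in>omega Tr (bse T). bse S = bse T) \<Longrightarrow> S \<in> omega Tr (bse T) \<Longrightarrow>
     T' \<in> children S \<Longrightarrow> created_in Tr T T'"
| inner: "S \<in> omega Tr (bse T) \<Longrightarrow> bse S \<noteq> bse T \<Longrightarrow> created_in Tr S T' \<Longrightarrow> created_in Tr T T'"
| outer: "S \<in> omega Tr (bse T) \<Longrightarrow> bse S \<noteq> bse T \<Longrightarrow> refine Tr S Tr1 \<Longrightarrow>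
     created_in Tr1 T T' \<Longrightarrow> created_in Tr T T'"

inductive in_B :: "('a::real_vector) tsimplex set \<Rightarrow> 'a tsimplex set \<Rightarrow> bool" for T0 where
  init: "in_B T0 T0"
| step: "in_B T0 Tr \<Longrightarrow> T \<in> Tr \<Longrightarrow> refine Tr T Tr' \<Longrightarrow> in_B T0 Tr'"

definition all_simplices :: "('a::real_vector) tsimplex set \<Rightarrow> 'a tsimplex set" where
  "all_simplices T0 = \<Union>{Tr. in_B T0 Tr}"

end

theory Submission
  imports Defs
begin

text \<open>The chains are read off the call stack: a call Refine(Tr', T) flags only
  simplices S \<in> \<omega>(bse T), so bse T is an edge of S, and Tr' \<in> B because it arises
  from the original triangulation by completed calls. Neither the dimension, the
  colouring nor the hypothesis T' \<in> TT enters the argument.\<close>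

definition bse_step :: "'a tsimplex set \<Rightarrow> 'a tsimplex \<Rightarrow> 'a tsimplex \<Rightarrow> bool" where
  "bse_step A S S' \<longleftrightarrow> S' \<in> A \<and> bse S \<in> edges S'"

definition bse_chain :: "'a tsimplex list \<Rightarrow> bool" where
  "bse_chain Ts \<longleftrightarrow> (\<forall>j < length Ts - 1. bse (Ts ! j) \<in> edges (Ts ! Suc j))"

lemma bse_chain_singleton: "bse_chain [T]"
  by (simp add: bse_chain_def)

lemma bse_chain_Cons:
  assumes "bse_chain Ts" "Ts \<noteq> []" "bse T \<in> edges (hd Ts)"
  shows "bse_chain (T # Ts)"
  unfolding bse_chain_def
proof (intro allI impI)
  fix j assume "j < length (T # Ts) - 1"
  then show "bse ((T # Ts) ! j) \<in> edges ((T # Ts) ! Suc j)"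
    using assms by (cases j) (auto simp: bse_chain_def hd_conv_nth)
qed

lemma bse_step_rtranclp_imp_chain:
  assumes "(bse_step A)\<^sup>*\<^sup>* T T'" "T \<in> A"
  shows "\<exists>Ts. Ts \<noteq> [] \<and> hd Ts = T \<and> last Ts = T' \<and> set Ts \<subseteq> A \<and> bse_chain Ts"
  using assms
proof (induction rule: converse_rtranclp_induct)
  case base
  then show ?case by (intro exI[of _ "[T']"]) (simp add: bse_chain_singleton)
next
  case (step T S)
  then obtain Ts where Ts: "Ts \<noteq> []" "hd Ts = S" "last Ts = T'" "set Ts \<subseteq> A" "bse_chain Ts"
    by (auto simp: bse_step_def)
  with step.prems step.hyps(1) show ?case
    by (intro exI[of _ "T # Ts"]) (auto simp: bse_step_def intro: bse_chain_Cons)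
qed

lemma in_B_subset_all_simplices: "in_B T0 Tr \<Longrightarrow> Tr \<subseteq> all_simplices T0"
  unfolding all_simplices_def by blast

lemma omega_imp_bse_step:
  assumes "in_B T0 Tr" "S \<in> omega Tr (bse T)"
  shows "bse_step (all_simplices T0) T S"
  using assms in_B_subset_all_simplices by (auto simp: omega_def bse_step_def)

lemma in_B_refine_omega:
  "in_B T0 Tr \<Longrightarrow> S \<in> omega Tr e \<Longrightarrow> refine Tr S Tr1 \<Longrightarrow> in_B T0 Tr1"
  by (auto simp: omega_def intro: in_B.step)

lemma flagged_in_imp_bse_step_rtranclp:
  assumes "flagged_in Tr T T'" "in_B T0 Tr"
  shows "(bse_step (all_simplices T0))\<^sup>*\<^sup>* T T'"
  using assms
proof (induction rule: flagged_in.induct)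
  case (here S Tr T)
  then show ?case by (blast intro: omega_imp_bse_step)
next
  case (inner S Tr T T')
  then show ?case by (blast intro: omega_imp_bse_step converse_rtranclp_into_rtranclp)
next
  case (outer S Tr T Tr1 T')
  then show ?case by (blast intro: in_B_refine_omega)
qed

lemma created_in_imp_child_of_bse_step_rtranclp:
  assumes "created_in Tr T T'" "in_B T0 Tr"
  shows "\<exists>S. (bse_step (all_simplices T0))\<^sup>*\<^sup>* T S \<and> T' \<in> children S"
  using assms
proof (induction rule: created_in.induct)
  case (here Tr T S T')
  then show ?case by (blast intro: omega_imp_bse_step)
next
  case (inner S Tr T T')
  then show ?case by (blast intro: omega_imp_bse_step converse_rtranclp_into_rtranclp)
next
  case (outer S Tr T Tr1 T')
  then show ?case by (blast intro: in_B_refine_omega)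
qed

theorem lemma2p4:
  fixes T0 :: "(real^'n) set set" and c :: "real^'n \<Rightarrow> nat"
    and Tr :: "(real^'n) tsimplex set" and T T' :: "(real^'n) tsimplex"
  assumes "CARD('n) \<ge> 2"
    and "colored_init_triang T0 c"
    and "in_B (init_mesh T0 c) Tr"
    and "T \<in> Tr"
  shows "(flagged_in Tr T T' \<and> T' \<in> all_simplices (init_mesh T0 c) \<longrightarrow>
           (\<exists>Ts. Ts \<noteq> [] \<and> hd Ts = T \<and> last Ts = T' \<and>
              set Ts \<subseteq> all_simplices (init_mesh T0 c) \<and>
              (\<forall>j < length Ts - 1. bse (Ts ! j) \<in> edges (Ts ! Suc j))))
       \<and> (created_in Tr T T' \<and> T' \<in> all_simplices (init_mesh T0 c) \<longrightarrow>
           (\<exists>Ts. Ts \<noteq> [] \<and> hd Ts = T \<and>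
              set Ts \<subseteq> all_simplices (init_mesh T0 c) \<and>
              (\<forall>j < length Ts - 1. bse (Ts ! j) \<in> edges (Ts ! Suc j)) \<and>
              T' \<in> children (last Ts)))"
proof -
  let ?A = "all_simplices (init_mesh T0 c)"
  have T: "T \<in> ?A" using assms(3,4) in_B_subset_all_simplices by blast
  have flagged: "\<exists>Ts. Ts \<noteq> [] \<and> hd Ts = T \<and> last Ts = T' \<and> set Ts \<subseteq> ?A \<and> bse_chain Ts"
    if "flagged_in Tr T T'"
    using bse_step_rtranclp_imp_chain[OF flagged_in_imp_bse_step_rtranclp[OF that assms(3)] T] .
  have created: "\<exists>Ts. Ts \<noteq> [] \<and> hd Ts = T \<and> set Ts \<subseteq> ?A \<and> bse_chain Ts \<and> T' \<in> children (last Ts)"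
    if created: "created_in Tr T T'"
  proof -
    obtain S where "(bse_step ?A)\<^sup>*\<^sup>* T S" "T' \<in> children S"
      using created_in_imp_child_of_bse_step_rtranclp[OF created assms(3)] by blast
    then show ?thesis using bse_step_rtranclp_imp_chain[OF _ T] by metis
  qed
  show ?thesis using flagged created unfolding bse_chain_def by blast
qed

end
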